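(* Let $F_{ij}$ be a dual-convex $m\times n$ net in $I^3$ that has a reciprocal-parallel net $C_{kl}$. Then the planar net obtained from the top view $\overline{C_{kl}}$ by a rotation through $\pi/2$ is Christoffel dual to the top view $\overline{p^*_{kl}}$ of the metric dual net of $F_{ij}$.
   Context: $I^3$ is $\mathbb{R}^3$ with coordinates $(x,y,z)$; isotropic = parallel to the $z$-axis; top view of $(x,y,z)$ is $(x,y)$. Metric duality: non-isotropic plane $z=P^1x+P^2y-P^3$ $\leftrightarrow$ point $(P^1,P^2,P^3)$. An $m\times n$ net: points $F_{ij}$, $0\le i\le m,0\le j\le n$, with $F_{ij},F_{i+1,j},F_{i+1,j+1},F_{i,j+1}$ consecutive vertices of a convex planar quadrilateral (face $p_{ij}$) for all $0\le i<m,0\le j<n$. Boundary vertices: $i\in\{0,m\}$ or $j\in\{0,n\}$; consecutive faces around non-boundary $F_{ij}$: $p_{i-1,j-1},p_{i,j-1},p_{ij},p_{i-1,j}$. Convex 4-hedral angle with vertex $O$: union of rays from $O$ meeting a convex quadrilateral in a plane not through $O$; flat angles: rays through one side; admissible: isotropic line through $O$ meets its interior. Dual-convex: $m,n\ge2$ and at each non-boundary vertex the four consecutive face planes are planes of four consecutive flat angles of an admissible convex 4-hedral angle. Metric dual: the $(m-1)\times(n-1)$ net of points $p^*_{kl}$. A collection $C_{kl}$, $0\le k<m,0\le l<n$, not all equal, is reciprocal-parallel to $F_{ij}$ if $C_{i,j-1}C_{ij}\parallel F_{i+1,j}F_{ij}$ for all $0\le i<m,0<j<n$ and $C_{i-1,j}C_{ij}\parallel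 F_{i,j+1}F_{ij}$ for all $0<i<m,0\le j<n$. Labeled quadrilaterals $ABCD$, $A'B'C'D'$ are dual if $AB\parallel A'B'$, $BC\parallel B'C'$, $CD\parallel C'D'$, $DA\parallel D'A'$, $AC\parallel B'D'$, $BD\parallel A'C'$; two nets are Christoffel dual if corresponding faces are dual. *)

theory Defs
  imports "HOL-Analysis.Analysis"
begin

text \<open>Points of I^3 are vectors in real^3 (coordinates x = v$1, y = v$2, z = v$3);
  points of the plane are vectors in real^2.\<close>

definition top_view :: "real^3 \<Rightarrow> real^2" where
  "top_view v = vector [v$1, v$2]"

definition rot90 :: "real^2 \<Rightarrow> real^2" where
  "rot90 v = vector [- (v$2), v$1]"

definition par :: "'a::real_vector \<Rightarrow> 'a \<Rightarrow> bool" where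
  "par u v \<longleftrightarrow> (\<exists>c. u = c *\<^sub>R v) \<or> (\<exists>c. v = c *\<^sub>R u)"

definition convex_quad :: "'a::euclidean_space \<Rightarrow> 'a \<Rightarrow> 'a \<Rightarrow> 'a \<Rightarrow> bool" where
  "convex_quad A B C D \<longleftrightarrow>
     open_segment A C \<inter> open_segment B D \<noteq> {} \<and> \<not> collinear {A, B, C, D}"

text \<open>An m x n net: points F i j, 0 \<le> i \<le> m, 0 \<le> j \<le> n, with convex planar faces.\<close>
definition is_net :: "nat \<Rightarrow> nat \<Rightarrow> (nat \<Rightarrow> nat \<Rightarrow> 'a::euclidean_space) \<Rightarrow> bool" where
  "is_net m n F \<longleftrightarrow>
     (\<forall>i<m. \<forall>j<n. convex_quad (F i j) (F (Suc i) j) (F (Suc i) (Suc j)) (F i (Suc j)))"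

definition face_plane :: "(nat \<Rightarrow> nat \<Rightarrow> real^3) \<Rightarrow> nat \<Rightarrow> nat \<Rightarrow> (real^3) set" where
  "face_plane F i j = affine hull {F i j, F (Suc i) j, F (Suc i) (Suc j), F i (Suc j)}"

definition hedral_angle :: "real^3 \<Rightarrow> real^3 \<Rightarrow> real^3 \<Rightarrow> real^3 \<Rightarrow> real^3 \<Rightarrow> (real^3) set" where
  "hedral_angle V A B C D =
     {V + t *\<^sub>R (X - V) | t X. t \<ge> 0 \<and> X \<in> convex hull {A, B, C, D}}"

definition isotropic_line :: "real^3 \<Rightarrow> (real^3) set" where
  "isotropic_line V = {V + s *\<^sub>R axis 3 1 | s. True}"

text \<open>Since any cyclic relabelling or reversal of a
  convex quadrilateral is again one, we may take the flat angles OAB, OBC, OCD, ODA.\<close>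
definition admissible_consecutive_planes ::
  "(real^3) set \<Rightarrow> (real^3) set \<Rightarrow> (real^3) set \<Rightarrow> (real^3) set \<Rightarrow> bool" where
  "admissible_consecutive_planes P1 P2 P3 P4 \<longleftrightarrow>
     (\<exists>V A B C D. convex_quad A B C D \<and> V \<notin> affine hull {A, B, C, D} \<and>
        isotropic_line V \<inter> interior (hedral_angle V A B C D) \<noteq> {} \<and>
        P1 = affine hull {V, A, B} \<and> P2 = affine hull {V, B, C} \<and>
        P3 = affine hull {V, C, D} \<and> P4 = affine hull {V, D, A})"

definition dual_convex :: "nat \<Rightarrow> nat \<Rightarrow> (nat \<Rightarrow> nat \<Rightarrow> real^3) \<Rightarrow> bool" where
  "dual_convex m n F \<longleftrightarrow> is_net m n F \<and> m \<ge> 2 \<and> n \<ge> 2 \<and>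
     (\<forall>i j. 0 < i \<and> i < m \<and> 0 < j \<and> j < n \<longrightarrow>
        admissible_consecutive_planes
          (face_plane F (i - 1) (j - 1)) (face_plane F i (j - 1))
          (face_plane F i j) (face_plane F (i - 1) j))"

text \<open>Metric dual point of the (non-isotropic) face p_kl: the point (P1,P2,P3) such that
  the face plane is z = P1 x + P2 y - P3.\<close>
definition metric_dual :: "(nat \<Rightarrow> nat \<Rightarrow> real^3) \<Rightarrow> nat \<Rightarrow> nat \<Rightarrow> real^3" where
  "metric_dual F k l = (THE P. face_plane F k l =
      {v. v$3 = P$1 * v$1 + P$2 * v$2 - P$3})"

definition reciprocal_parallel ::
  "nat \<Rightarrow> nat \<Rightarrow> (nat \<Rightarrow> nat \<Rightarrow> real^3) \<Rightarrow> (nat \<Rightarrow> nat \<Rightarrow> real^3) \<Rightarrow> bool" where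
  "reciprocal_parallel m n F C \<longleftrightarrow>
     (\<exists>k l k' l'. k < m \<and> l < n \<and> k' < m \<and> l' < n \<and> C k l \<noteq> C k' l') \<and>
     (\<forall>i j. i < m \<and> 0 < j \<and> j < n \<longrightarrow>
        par (C i j - C i (j - 1)) (F i j - F (Suc i) j)) \<and>
     (\<forall>i j. 0 < i \<and> i < m \<and> j < n \<longrightarrow>
        par (C i j - C (i - 1) j) (F i j - F i (Suc j)))"

definition dual_quads :: "'a::real_vector \<Rightarrow> 'a \<Rightarrow> 'a \<Rightarrow> 'a \<Rightarrow> 'a \<Rightarrow> 'a \<Rightarrow> 'a \<Rightarrow> 'a \<Rightarrow> bool" where
  "dual_quads A B C D A' B' C' D' \<longleftrightarrow>
     par (B - A) (B' - A') \<and> par (C - B) (C' - B') \<and> par (D - C) (D' - C') \<and>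
     par (A - D) (A' - D') \<and> par (C - A) (D' - B') \<and> par (D - B) (C' - A')"

definition christoffel_dual ::
  "nat \<Rightarrow> nat \<Rightarrow> (nat \<Rightarrow> nat \<Rightarrow> 'a::real_vector) \<Rightarrow> (nat \<Rightarrow> nat \<Rightarrow> 'a) \<Rightarrow> bool" where
  "christoffel_dual M N G H \<longleftrightarrow>
     (\<forall>k<M. \<forall>l<N. dual_quads
        (G k l) (G (Suc k) l) (G (Suc k) (Suc l)) (G k (Suc l))
        (H k l) (H (Suc k) l) (H (Suc k) (Suc l)) (H k (Suc l)))"

end

theory Submission
  imports Defs
begin

(* Every face plane of a dual-convex net is non-isotropic: it is the plane of a flat angle of an
   admissible 4-hedral angle at an interior vertex V, and an isotropic plane through V would keep
   the whole angle in one closed half-space, so the isotropic line through V, which lies in that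
   plane, could not meet the interior of the angle. Hence each face plane is the graph
   z = P1 x + P2 y - P3 of its metric dual point P.
   An edge of C is parallel to an edge of F and hence to both face planes through that edge, so
   both graphs have the same slope along it: the top view of P' - P is orthogonal to the top view
   of the edge, i.e. parallel to its rotation through pi/2. The directions along which a graph
   plane has a given slope form a linear subspace, and each diagonal of a face of C is, in two
   ways, the sum or difference of two edges parallel to a common face plane of F; this gives the
   conditions on the diagonals. *)

lemma convex_quad_rotate:
  assumes "convex_quad A B C D"
  shows "convex_quad B C D A"
  using assms unfolding convex_quad_def
  by (metis insert_commute open_segment_commute inf_commute)

lemma convex_quad_neq:
  assumes "convex_quad A B C D"
  shows "A \<noteq> B"
proof
  assume "A = B"
  with assms obtain x where x: "x \<in> open_segment A C" "x \<in> open_segment A D"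
    unfolding convex_quad_def by blast
  then have "x \<noteq> A" "collinear {A, x, C}" "collinear {A, x, D}"
    by (auto simp: open_segment_def between_mem_segment[symmetric] intro: between_imp_collinear)
  then have "collinear {A, x, C, D}"
    by (simp add: collinear_4_3)
  moreover have "{A, B, C, D} \<subseteq> {A, x, C, D}"
    using \<open>A = B\<close> by auto
  ultimately show False
    using assms collinear_subset
    unfolding convex_quad_def by blast
qed

lemma convex_quad_one_side:
  fixes a :: "'a::euclidean_space"
  assumes "convex_quad A B C D" "a \<bullet> A = b" "a \<bullet> B = b"
  obtains "{A, B, C, D} \<subseteq> {x. a \<bullet> x \<ge> b}" | "{A, B, C, D} \<subseteq> {x. a \<bullet> x \<le> b}"
proof -
  from assms(1) obtain x where "x \<in> open_segment A C" "x \<in> open_segment B D"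
    unfolding convex_quad_def by blast
  then obtain s t where st: "0 < s" "0 < t"
    "x = (1 - s) *\<^sub>R A + s *\<^sub>R C" "x = (1 - t) *\<^sub>R B + t *\<^sub>R D"
    by (auto simp: in_segment)
  have "s * (a \<bullet> C - b) = t * (a \<bullet> D - b)"
    using arg_cong[OF st(3), of "inner a"] arg_cong[OF st(4), of "inner a"] assms(2,3)
    by (simp add: inner_add_right algebra_simps)
  then have "a \<bullet> C \<ge> b \<and> a \<bullet> D \<ge> b \<or> a \<bullet> C \<le> b \<and> a \<bullet> D \<le> b"
    using st(1,2) by (smt (verit) mult_pos_neg mult_pos_pos)
  then show thesis
    using that assms(2,3) by auto
qed

lemma hedral_angle_rotate: "hedral_angle V B C D A = hedral_angle V A B C D"
proof -
  have "{B, C, D, A} = {A, B, C, D}"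
    by auto
  then show ?thesis
    unfolding hedral_angle_def by simp
qed

lemma hedral_angle_subset_halfspace:
  assumes "a \<bullet> V = b" "{A, B, C, D} \<subseteq> {x. a \<bullet> x \<ge> b}"
  shows "hedral_angle V A B C D \<subseteq> {x. a \<bullet> x \<ge> b}"
proof
  fix z assume "z \<in> hedral_angle V A B C D"
  then obtain t X where z: "z = V + t *\<^sub>R (X - V)" "t \<ge> 0" "X \<in> convex hull {A, B, C, D}"
    unfolding hedral_angle_def by blast
  have "convex hull {A, B, C, D} \<subseteq> {x. a \<bullet> x \<ge> b}"
    using assms(2) convex_halfspace_ge by (rule hull_minimal)
  with z(3) have "a \<bullet> X \<ge> b" by auto
  moreover have "a \<bullet> z = b + t * (a \<bullet> X - b)"
    using assms(1) by (simp add: z(1) inner_add_right inner_diff_right)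
  ultimately show "z \<in> {x. a \<bullet> x \<ge> b}"
    using z(2) by simp
qed

lemma isotropic_line_subset_hyperplane:
  assumes "a $ 3 = 0" "a \<bullet> V = b"
  shows "isotropic_line V \<subseteq> {x. a \<bullet> x = b}"
  using assms by (auto simp: isotropic_line_def inner_add_right inner_axis)

lemma isotropic_line_misses_hedral_interior:
  assumes "a \<noteq> 0" "a $ 3 = 0" "a \<bullet> V = b" "{A, B, C, D} \<subseteq> {x. a \<bullet> x \<ge> b}"
  shows "isotropic_line V \<inter> interior (hedral_angle V A B C D) = {}"
proof -
  have "interior (hedral_angle V A B C D) \<subseteq> {x. a \<bullet> x > b}"
    using interior_mono[OF hedral_angle_subset_halfspace[OF assms(3,4)]] assms(1) by simp
  then show ?thesis
    using isotropic_line_subset_hyperplane[OF assms(2,3)] by auto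
qed

lemma admissible_flat_angle_plane_not_vertical:
  assumes "convex_quad A B C D"
    and "isotropic_line V \<inter> interior (hedral_angle V A B C D) \<noteq> {}"
    and "a \<noteq> 0" "affine hull {V, A, B} = {x. a \<bullet> x = b}"
  shows "a $ 3 \<noteq> 0"
proof
  assume "a $ 3 = 0"
  have "{V, A, B} \<subseteq> {x. a \<bullet> x = b}"
    using assms(4) hull_subset[of "{V, A, B}" affine] by simp
  then have "a \<bullet> V = b" "a \<bullet> A = b" "a \<bullet> B = b"
    by simp_all
  from assms(1) this(2,3) show False
  proof (cases rule: convex_quad_one_side)
    case 1
    then show False
      using isotropic_line_misses_hedral_interior[of a] \<open>a \<bullet> V = b\<close> \<open>a $ 3 = 0\<close> assms(2,3)
      by simp
  next
    case 2
    then have "{A, B, C, D} \<subseteq> {x. (- a) \<bullet> x \<ge> - b}"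
      by auto
    then show False
      using isotropic_line_misses_hedral_interior[of "- a"] \<open>a \<bullet> V = b\<close> \<open>a $ 3 = 0\<close> assms(2,3)
      by auto
  qed
qed

lemma noncollinear_affine_hull_hyperplane:
  fixes V A B :: "real^3"
  assumes "\<not> collinear {V, A, B}"
  obtains a b where "a \<noteq> 0" "affine hull {V, A, B} = {x. a \<bullet> x = b}"
proof -
  have "card {V, A, B} \<le> 3"
    by (simp add: card_insert_if)
  then have "aff_dim {V, A, B} \<le> 2"
    using aff_dim_le_card[of "{V, A, B}"] by simp
  moreover have "aff_dim {V, A, B} > 1"
    using assms collinear_aff_dim[of "{V, A, B}"] by linarith
  ultimately have "aff_dim {V, A, B} = DIM(real^3) - 1"
    by simp
  then show thesis
    using aff_dim_eq_hyperplane that by blast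
qed

definition dual_plane :: "real^3 \<Rightarrow> (real^3) set" where
  "dual_plane P = {v. v$3 = P$1 * v$1 + P$2 * v$2 - P$3}"

lemma inj_dual_plane: "inj dual_plane"
proof (rule injI)
  fix P Q assume eq: "dual_plane P = dual_plane Q"
  have "vector [0, 0, - P$3] \<in> dual_plane Q" "vector [1, 0, P$1 - P$3] \<in> dual_plane Q"
    "vector [0, 1, P$2 - P$3] \<in> dual_plane Q"
    unfolding eq[symmetric] by (simp_all add: dual_plane_def)
  then show "P = Q"
    by (simp add: dual_plane_def vec_eq_iff forall_3)
qed

lemma nonvertical_hyperplane_eq_dual_plane:
  fixes a :: "real^3"
  assumes "a $ 3 \<noteq> 0"
  shows "{x. a \<bullet> x = b} = dual_plane (vector [- (a$1 / a$3), - (a$2 / a$3), - (b / a$3)])"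
  using assms by (auto simp: dual_plane_def inner_vec_def sum_3 field_simps)

lemma metric_dual_eqI:
  assumes "face_plane F k l = dual_plane P"
  shows "metric_dual F k l = P"
  unfolding metric_dual_def dual_plane_def[symmetric] assms
  by (rule the_equality) (simp_all add: inj_eq[OF inj_dual_plane])

lemma flat_angle_plane_eq_dual_plane:
  assumes "convex_quad A B C D"
    and "isotropic_line V \<inter> interior (hedral_angle V A B C D) \<noteq> {}"
    and "\<not> collinear (affine hull {V, A, B})"
  obtains P where "affine hull {V, A, B} = dual_plane P"
proof -
  obtain a b where ab: "a \<noteq> 0" "affine hull {V, A, B} = {x. a \<bullet> x = b}"
    using assms(3) noncollinear_affine_hull_hyperplane collinear_affine_hull_collinear by metis
  then have "a $ 3 \<noteq> 0"
    using admissible_flat_angle_plane_not_vertical assms(1,2) by blast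
  then show thesis
    using nonvertical_hyperplane_eq_dual_plane ab(2) that by metis
qed

lemma admissible_plane_eq_dual_plane:
  assumes "admissible_consecutive_planes P1 P2 P3 P4" "P \<in> {P1, P2, P3, P4}" "\<not> collinear P"
  obtains Q where "P = dual_plane Q"
proof -
  from assms(1) obtain V A B C D where q: "convex_quad A B C D"
    and iso: "isotropic_line V \<inter> interior (hedral_angle V A B C D) \<noteq> {}"
    and P: "P1 = affine hull {V, A, B}" "P2 = affine hull {V, B, C}"
       "P3 = affine hull {V, C, D}" "P4 = affine hull {V, D, A}"
    unfolding admissible_consecutive_planes_def by blast
  have q': "convex_quad B C D A" "convex_quad C D A B" "convex_quad D A B C"
    using q convex_quad_rotate by blast+
  have iso': "isotropic_line V \<inter> interior (hedral_angle V B C D A) \<noteq> {}"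
    "isotropic_line V \<inter> interior (hedral_angle V C D A B) \<noteq> {}"
    "isotropic_line V \<inter> interior (hedral_angle V D A B C) \<noteq> {}"
    using iso by (simp_all add: hedral_angle_rotate)
  from assms(2) consider "P = P1" | "P = P2" | "P = P3" | "P = P4"
    by blast
  then show thesis
  proof cases
    case 1
    then show thesis
      using flat_angle_plane_eq_dual_plane[OF q iso] assms(3) P(1) that by blast
  next
    case 2
    then show thesis
      using flat_angle_plane_eq_dual_plane[OF q'(1) iso'(1)] assms(3) P(2) that by blast
  next
    case 3
    then show thesis
      using flat_angle_plane_eq_dual_plane[OF q'(2) iso'(2)] assms(3) P(3) that by blast
  next
    case 4
    then show thesis
      using flat_angle_plane_eq_dual_plane[OF q'(3) iso'(3)] assms(3) P(4) that by blast
  qed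
qed

lemma face_plane_eq_dual_plane:
  assumes "dual_convex m n F" "k < m" "l < n"
  shows "face_plane F k l = dual_plane (metric_dual F k l)"
proof -
  \<comment> \<open>every face has a corner that is an interior vertex of the net\<close>
  define i where "i = (if k = 0 then 1 else k)"
  define j where "j = (if l = 0 then 1 else l)"
  have "0 < i" "i < m" "0 < j" "j < n"
    using assms unfolding dual_convex_def i_def j_def by auto
  then have adm: "admissible_consecutive_planes
      (face_plane F (i - 1) (j - 1)) (face_plane F i (j - 1)) (face_plane F i j) (face_plane F (i - 1) j)"
    using assms(1) unfolding dual_convex_def by blast
  have "k \<in> {i - 1, i}" "l \<in> {j - 1, j}"
    unfolding i_def j_def by auto
  then have mem: "face_plane F k l \<in> {face_plane F (i - 1) (j - 1), face_plane F i (j - 1),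
      face_plane F i j, face_plane F (i - 1) j}"
    by auto
  have "convex_quad (F k l) (F (Suc k) l) (F (Suc k) (Suc l)) (F k (Suc l))"
    using assms unfolding dual_convex_def is_net_def by blast
  then have "\<not> collinear (face_plane F k l)"
    unfolding face_plane_def convex_quad_def collinear_affine_hull_collinear by blast
  then obtain P where "face_plane F k l = dual_plane P"
    using admissible_plane_eq_dual_plane[OF adm mem] by blast
  moreover from this have "metric_dual F k l = P"
    by (rule metric_dual_eqI)
  ultimately show ?thesis
    by simp
qed

lemma net_vertices_in_dual_plane:
  assumes "dual_convex m n F" "k < m" "l < n"
  shows "{F k l, F (Suc k) l, F (Suc k) (Suc l), F k (Suc l)} \<subseteq> dual_plane (metric_dual F k l)"
  using face_plane_eq_dual_plane[OF assms] by (metis face_plane_def hull_subset)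

definition plane_directions :: "real^3 \<Rightarrow> (real^3) set" where
  "plane_directions P = {w. w$3 = P$1 * w$1 + P$2 * w$2}"

lemma subspace_plane_directions: "subspace (plane_directions P)"
  by (auto simp: subspace_def plane_directions_def algebra_simps)

lemma diff_in_plane_directions:
  assumes "X \<in> dual_plane P" "Y \<in> dual_plane P"
  shows "X - Y \<in> plane_directions P"
  using assms by (simp add: dual_plane_def plane_directions_def algebra_simps)

lemma subspace_par_mem:
  assumes "subspace S" "par x e" "e \<noteq> 0" "e \<in> S"
  shows "x \<in> S"
  using assms(2) unfolding par_def
proof
  assume "\<exists>c. x = c *\<^sub>R e"
  then show ?thesis
    using assms(1,4) subspace_scale by blast
next
  assume "\<exists>c. e = c *\<^sub>R x"
  then obtain c where "e = c *\<^sub>R x"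
    by blast
  with assms(3) have "x = inverse c *\<^sub>R e"
    by auto
  then show ?thesis
    using assms(1,4) subspace_scale by blast
qed

lemma par_edge_in_plane_directions:
  assumes "par e (X - Y)" "X \<noteq> Y" "X \<in> dual_plane P" "Y \<in> dual_plane P"
  shows "e \<in> plane_directions P"
  using subspace_par_mem[OF subspace_plane_directions assms(1)] assms(2-4) diff_in_plane_directions
  by simp

lemma net_edges_nonzero:
  assumes "is_net m n F" "k < m" "l < n"
  shows "F k l \<noteq> F (Suc k) l" "F k l \<noteq> F k (Suc l)"
proof -
  have q: "convex_quad (F k l) (F (Suc k) l) (F (Suc k) (Suc l)) (F k (Suc l))"
    using assms unfolding is_net_def by blast
  then show "F k l \<noteq> F (Suc k) l"
    by (rule convex_quad_neq)
  have "convex_quad (F k (Suc l)) (F k l) (F (Suc k) l) (F (Suc k) (Suc l))"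
    using q convex_quad_rotate by blast
  then show "F k l \<noteq> F k (Suc l)"
    using convex_quad_neq by metis
qed

lemma reciprocal_parallel_edges_in_plane_directions:
  assumes F: "dual_convex m n F" and C: "reciprocal_parallel m n F C"
  shows "i < m \<Longrightarrow> Suc j < n \<Longrightarrow> C i (Suc j) - C i j \<in>
      plane_directions (metric_dual F i j) \<inter> plane_directions (metric_dual F i (Suc j))"
    and "Suc i < m \<Longrightarrow> j < n \<Longrightarrow> C (Suc i) j - C i j \<in>
      plane_directions (metric_dual F i j) \<inter> plane_directions (metric_dual F (Suc i) j)"
proof -
  assume "i < m" "Suc j < n"
  then have "par (C i (Suc j) - C i j) (F i (Suc j) - F (Suc i) (Suc j))"
    using C unfolding reciprocal_parallel_def by (metis diff_Suc_1 zero_less_Suc)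
  moreover have "F i (Suc j) \<noteq> F (Suc i) (Suc j)"
    using net_edges_nonzero(1) F \<open>i < m\<close> \<open>Suc j < n\<close> unfolding dual_convex_def by blast
  ultimately show "C i (Suc j) - C i j \<in>
      plane_directions (metric_dual F i j) \<inter> plane_directions (metric_dual F i (Suc j))"
    using net_vertices_in_dual_plane[OF F, of i j] net_vertices_in_dual_plane[OF F, of i "Suc j"]
      \<open>i < m\<close> \<open>Suc j < n\<close> par_edge_in_plane_directions by auto
next
  assume "Suc i < m" "j < n"
  then have "par (C (Suc i) j - C i j) (F (Suc i) j - F (Suc i) (Suc j))"
    using C unfolding reciprocal_parallel_def by (metis diff_Suc_1 zero_less_Suc)
  moreover have "F (Suc i) j \<noteq> F (Suc i) (Suc j)"
    using net_edges_nonzero(2) F \<open>Suc i < m\<close> \<open>j < n\<close> unfolding dual_convex_def by blast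
  ultimately show "C (Suc i) j - C i j \<in>
      plane_directions (metric_dual F i j) \<inter> plane_directions (metric_dual F (Suc i) j)"
    using net_vertices_in_dual_plane[OF F, of i j] net_vertices_in_dual_plane[OF F, of "Suc i" j]
      \<open>Suc i < m\<close> \<open>j < n\<close> par_edge_in_plane_directions by auto
qed

lemma rot90_top_view_diff: "rot90 (top_view X) - rot90 (top_view Y) = rot90 (top_view (X - Y))"
  by (simp add: rot90_def top_view_def vec_eq_iff forall_2)

lemma par_vec2I:
  fixes u w :: "real^2"
  assumes "u$1 * w$2 = u$2 * w$1"
  shows "par u w"
proof (cases "u = 0")
  case True
  then have "u = 0 *\<^sub>R w"
    by simp
  then show ?thesis
    unfolding par_def by blast
next
  case False
  then consider "u$1 \<noteq> 0" | "u$2 \<noteq> 0"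
    by (auto simp: vec_eq_iff forall_2)
  then have "w = (if u$1 \<noteq> 0 then w$1 / u$1 else w$2 / u$2) *\<^sub>R u"
    using assms by cases (auto simp: vec_eq_iff forall_2 field_simps)
  then show ?thesis
    unfolding par_def by blast
qed

lemma par_rot90_top_view:
  assumes "w \<in> plane_directions P" "w \<in> plane_directions Q"
  shows "par (rot90 (top_view w)) (top_view Q - top_view P)"
  using assms by (intro par_vec2I) (simp add: plane_directions_def rot90_def top_view_def algebra_simps)

lemma dual_quads_rot90_top_view:
  assumes "C10 - C00 \<in> plane_directions P00 \<inter> plane_directions P10"
    and "C11 - C10 \<in> plane_directions P10 \<inter> plane_directions P11"
    and "C11 - C01 \<in> plane_directions P01 \<inter> plane_directions P11"
    and "C01 - C00 \<in> plane_directions P00 \<inter> plane_directions P01"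
  shows "dual_quads
    (rot90 (top_view C00)) (rot90 (top_view C10)) (rot90 (top_view C11)) (rot90 (top_view C01))
    (top_view P00) (top_view P10) (top_view P11) (top_view P01)"
proof -
  have "C01 - C11 \<in> plane_directions P01 \<inter> plane_directions P11"
    "C00 - C01 \<in> plane_directions P00 \<inter> plane_directions P01"
    using assms(3,4) subspace_neg[OF subspace_plane_directions]
    by (metis IntD1 IntD2 IntI minus_diff_eq)+
  moreover have "C11 - C00 \<in> plane_directions P10 \<inter> plane_directions P01"
  proof -
    have "C11 - C00 = (C11 - C10) + (C10 - C00)" "C11 - C00 = (C11 - C01) + (C01 - C00)"
      by simp_all
    then show ?thesis
      using assms subspace_add[OF subspace_plane_directions] by (metis IntD1 IntD2 IntI)
  qed
  moreover have "C01 - C10 \<in> plane_directions P00 \<inter> plane_directions P11"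
  proof -
    have "C01 - C10 = (C01 - C00) - (C10 - C00)" "C01 - C10 = (C11 - C10) - (C11 - C01)"
      by simp_all
    then show ?thesis
      using assms subspace_diff[OF subspace_plane_directions] by (metis IntD1 IntD2 IntI)
  qed
  ultimately show ?thesis
    using assms unfolding dual_quads_def rot90_top_view_diff by (blast intro: par_rot90_top_view)
qed

theorem corollary1:
  fixes m n :: nat and F C :: "nat \<Rightarrow> nat \<Rightarrow> real^3"
  assumes "dual_convex m n F"
    and "reciprocal_parallel m n F C"
  shows "christoffel_dual (m - 1) (n - 1)
           (\<lambda>k l. rot90 (top_view (C k l)))
           (\<lambda>k l. top_view (metric_dual F k l))"
  unfolding christoffel_dual_def
  using reciprocal_parallel_edges_in_plane_directions[OF assms]
  by (auto intro!: dual_quads_rot90_top_view)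

end
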